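(* Let $m,n,k$ be positive integers, $A\in\mathbb{R}^{m\times n}$, $x^*\in\mathbb{R}^n$ with support $S^*=\{i:x^*_i\neq0\}$ satisfying $1\le|S^*|\le k$, and $y=Ax^*$ (noiseless case, $e=0$). Assume $A$ satisfies the $(2k+1)$-RIP, that $\|A_i\|_2=1$ for every column $A_i$ of $A$, and that there exists $\beta\in(0,1)$ with $$\frac{2k\,\alpha_k^{RIP}\|x^*\|_2}{\min_{i\in S^*}|x^*_i|}\le\beta .$$ Then $x^*$ satisfies $\gamma_k^{RIP}\|e\|_2<\frac{\min_{i\in S^*}|x^*_i|}{2k}-\alpha_k^{RIP}\|x^*\|_2$ (with $e=0$). As a consequence, for the initialization $\mathcal{X}^0=0$ and every $\eta>0$, if SEA is run for $N>\frac{k+1}{1-\beta}$ iterations, then $S^*\subseteq S^{t_{BEST}}$ and $x^{t_{BEST}}=x^*$.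
   Context: For $l\in\{1,\dots,n\}$, the restricted isometry constant $\delta_l$ of $A$ is the smallest $\delta\ge0$ such that $(1-\delta)\|x\|_2^2\le\|Ax\|_2^2\le(1+\delta)\|x\|_2^2$ for all $x\in\mathbb{R}^n$ with at most $l$ nonzero entries; $A$ satisfies the $l$-RIP if $\delta_l<1$. Define $\alpha_k^{RIP}=\delta_{2k+1}\left(1+\frac{\delta_{2k}}{1-\delta_k}\right)$ and $\gamma_k^{RIP}=1+\frac{\delta_{2k+1}\sqrt{1+\delta_k}}{1-\delta_k}$. For $v\in\mathbb{R}^n$, $\mathrm{largest}_k(v)$ is the set of indices of the $k$ entries of $v$ with largest absolute value (ties broken by selecting the highest indices). For $S\subseteq\{1,\dots,n\}$, $A_S$ is the submatrix of columns indexed by $S$, $v_S$ the restriction of a vector to $S$, and $A_S^\dagger$ the Moore–Penrose pseudoinverse of $A_S$. The Support Exploration Algorithm (SEA) with initialization $\mathcal{X}^0$ and step size $\eta>0$ generates, for $t=0,1,2,\dots$: $S^t=\mathrm{largest}_k(\mathcal{X}^t)$; $x^t_i=0$ for $i\notin S^t$ and $x^t_{S^t}=A_{S^t}^\dagger y$; $\mathcal{X}^{t+1}=\mathcal{X}^t-\eta A^T(Ax^t-y)$. When run for $N$ iterations (computing $x^0,\dots,x^{N-1}$), SEA outputs $x^{t_{BEST}}$ with $t_{BEST}\in\arg\min_{t'\in\{0,\dots,N-1\}}\|Ax^{t'}-y\|_2$. *)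

theory Defs
  imports "HOL-Analysis.Analysis"
begin

text \<open>Matrices A in R^{m x n} are rendered as real^'n^'m (A$i$j = row i, column j);
  the column index type 'n carries a linear order used for tie breaking in largest_k.\<close>

definition supp :: "real^'n \<Rightarrow> 'n set" where
  "supp x = {i. x $ i \<noteq> 0}"

definition ric :: "real^'n^'m \<Rightarrow> nat \<Rightarrow> real" where
  "ric A l = Inf {\<delta>. \<delta> \<ge> 0 \<and> (\<forall>x::real^'n. card (supp x) \<le> l \<longrightarrow>
       (1 - \<delta>) * (norm x)^2 \<le> (norm (A *v x))^2 \<and>
       (norm (A *v x))^2 \<le> (1 + \<delta>) * (norm x)^2)}"

definition has_RIP :: "real^'n^'m \<Rightarrow> nat \<Rightarrow> bool" where
  "has_RIP A l \<longleftrightarrow> ric A l < 1"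

definition alpha_RIP :: "real^'n^'m \<Rightarrow> nat \<Rightarrow> real" where
  "alpha_RIP A k = ric A (2*k+1) * (1 + ric A (2*k) / (1 - ric A k))"

definition gamma_RIP :: "real^'n^'m \<Rightarrow> nat \<Rightarrow> real" where
  "gamma_RIP A k = 1 + ric A (2*k+1) * sqrt (1 + ric A k) / (1 - ric A k)"

text \<open>largest_k v: indices of the k entries of largest absolute value, ties broken
  by choosing the higher index.\<close>
definition largest :: "nat \<Rightarrow> real^('n::{finite,linorder}) \<Rightarrow> 'n set" where
  "largest k v = {i. card {j. \<bar>v$j\<bar> > \<bar>v$i\<bar> \<or> (\<bar>v$j\<bar> = \<bar>v$i\<bar> \<and> j > i)} < k}"

definition pinv :: "real^'n^'m \<Rightarrow> real^'m^'n" where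
  "pinv M = (THE X. M ** X ** M = M \<and> X ** M ** X = X \<and>
                    transpose (M ** X) = M ** X \<and> transpose (X ** M) = X ** M)"

text \<open>A_S embedded as an m x n matrix whose columns outside S are zero. Then
  pinv (restr_cols A S) *v y is the vector that is 0 outside S and equals
  A_S^dagger y on S.\<close>
definition restr_cols :: "real^'n^'m \<Rightarrow> 'n set \<Rightarrow> real^'n^'m" where
  "restr_cols A S = (\<chi> i j. if j \<in> S then A$i$j else 0)"

definition sea_xt :: "real^('n::{finite,linorder})^'m \<Rightarrow> real^'m \<Rightarrow> nat \<Rightarrow> real^('n::{finite,linorder}) \<Rightarrow> real^('n::{finite,linorder})" where
  "sea_xt A y k X = pinv (restr_cols A (largest k X)) *v y"

primrec sea_X :: "real^('n::{finite,linorder})^'m \<Rightarrow> real^'m \<Rightarrow> nat \<Rightarrow> real \<Rightarrow> real^('n::{finite,linorder}) \<Rightarrow> nat \<Rightarrow> real^('n::{finite,linorder})" where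
  "sea_X A y k \<eta> X0 0 = X0"
| "sea_X A y k \<eta> X0 (Suc t) =
     sea_X A y k \<eta> X0 t - \<eta> *\<^sub>R (transpose A *v (A *v sea_xt A y k (sea_X A y k \<eta> X0 t) - y))"

definition sea_S :: "real^('n::{finite,linorder})^'m \<Rightarrow> real^'m \<Rightarrow> nat \<Rightarrow> real \<Rightarrow> real^('n::{finite,linorder}) \<Rightarrow> nat \<Rightarrow> 'n set" where
  "sea_S A y k \<eta> X0 t = largest k (sea_X A y k \<eta> X0 t)"

definition sea_x :: "real^('n::{finite,linorder})^'m \<Rightarrow> real^'m \<Rightarrow> nat \<Rightarrow> real \<Rightarrow> real^('n::{finite,linorder}) \<Rightarrow> nat \<Rightarrow> real^('n::{finite,linorder})" where
  "sea_x A y k \<eta> X0 t = sea_xt A y k (sea_X A y k \<eta> X0 t)"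

end

theory Submission
  imports Defs
begin

text \<open>Let a = alpha_k ||x*|| and mu = min {|x*_i| : i in S*}. Each x^t is the least-squares
  fit of y on S^t, so the gradient g^t = A^T (A x^t - y) vanishes on S^t, and the RIP bounds
  every other coordinate by |g^t_i + x*_i| <= a. Hence an entry of the accumulator outside S*
  grows by at most eta a per step, while an entry i in S* moves in the direction of sgn x*_i
  by at least eta (mu - a) in every step in which i is not selected. As S^t consists of the k
  largest entries, an index of S* that is missed at time t has been missed at most a t / (mu - a)
  times before. Summing over S*, a run of N steps in which S* is never selected would give
  (mu - a) N <= k (a N + mu - a), which contradicts 2 k a <= beta mu and N > (k + 1) / (1 - beta).
  Once S* is contained in S^t the least-squares fit is exact, so the best iterate has zero
  residual and, by the (2k+1)-RIP, equals x*.\<close>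

declare transpose_matrix_vector [simp del]

definition vec_restrict :: "'n set \<Rightarrow> real^'n \<Rightarrow> real^'n" where
  "vec_restrict S v = (\<chi> j. if j \<in> S then v $ j else 0)"

lemma vec_restrict_nth [simp]: "vec_restrict S v $ j = (if j \<in> S then v $ j else 0)"
  by (simp add: vec_restrict_def)

lemma vec_restrict_idem [simp]: "vec_restrict S (vec_restrict S v) = vec_restrict S v"
  by (simp add: vec_eq_iff)

lemma vec_restrict_eq_self: "supp v \<subseteq> S \<Longrightarrow> vec_restrict S v = v"
  by (auto simp: vec_eq_iff supp_def)

lemma supp_vec_restrict: "supp (vec_restrict S v) \<subseteq> S"
  by (auto simp: supp_def)

lemma supp_add: "supp (x + x') \<subseteq> supp x \<union> supp x'"
  by (auto simp: supp_def)

lemma supp_diff: "supp (x - x') \<subseteq> supp x \<union> supp x'"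
  by (auto simp: supp_def)

lemma card_supp_le: "supp x \<subseteq> T \<Longrightarrow> card T \<le> l \<Longrightarrow> card (supp x) \<le> l"
  by (metis card_mono finite le_trans)

lemma inner_eq_0_if_supp_subset:
  assumes "supp v \<subseteq> S" "\<And>j. j \<in> S \<Longrightarrow> w $ j = 0"
  shows "v \<bullet> w = 0"
proof -
  have "\<forall>j\<in>UNIV. v $ j * w $ j = 0"
    using assms by (auto simp: supp_def)
  then show ?thesis unfolding inner_vec_def inner_real_def by (rule sum.neutral)
qed

lemma inner_mult_vec_transpose:
  fixes A :: "real^'n^'m"
  shows "(A *v v) \<bullet> w = v \<bullet> (transpose A *v w)"
  using dot_lmul_matrix[of w A v] by (simp add: transpose_matrix_vector inner_commute)

lemma restr_cols_mult_vec: "restr_cols A S *v v = A *v vec_restrict S v"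
proof -
  have "restr_cols A S $ i $ j * v $ j = A $ i $ j * vec_restrict S v $ j" for i j
    by (simp add: restr_cols_def)
  then show ?thesis by (simp add: vec_eq_iff matrix_vector_mult_def)
qed

lemma transpose_restr_cols_mult_vec:
  "transpose (restr_cols A S) *v w = vec_restrict S (transpose A *v w)"
  by (simp add: vec_eq_iff restr_cols_def transpose_def matrix_vector_mult_def)

definition coord_proj :: "'n set \<Rightarrow> real^'n^'n" where
  "coord_proj S = (\<chi> i j. if i = j \<and> i \<in> S then 1 else 0)"

lemma coord_proj_mult_vec: "coord_proj S *v v = vec_restrict S v"
proof -
  have "(\<Sum>j\<in>UNIV. coord_proj S $ i $ j * v $ j) = vec_restrict S v $ i" for i
    by (simp add: coord_proj_def if_distrib if_distribR sum.If_cases)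
  then show ?thesis by (simp add: vec_eq_iff matrix_vector_mult_def)
qed

lemma transpose_coord_proj: "transpose (coord_proj S) = coord_proj S"
  by (auto simp: coord_proj_def transpose_def vec_eq_iff)

lemma transpose_add: "transpose (A + B) = transpose A + transpose B"
  by (simp add: transpose_def vec_eq_iff)

section \<open>The pseudoinverse of a column restriction\<close>

definition penrose_inverse :: "real^'n^'m \<Rightarrow> real^'m^'n \<Rightarrow> bool" where
  "penrose_inverse M X \<longleftrightarrow> M ** X ** M = M \<and> X ** M ** X = X \<and>
     transpose (M ** X) = M ** X \<and> transpose (X ** M) = X ** M"

lemma penrose_inverse_unique:
  assumes "penrose_inverse M X" "penrose_inverse M Y"
  shows "X = Y"
proof -
  have X: "M ** X ** M = M" "X ** M ** X = X" "transpose (M ** X) = M ** X" "transpose (X ** M) = X ** M"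
    and Y: "M ** Y ** M = M" "Y ** M ** Y = Y" "transpose (M ** Y) = M ** Y" "transpose (Y ** M) = Y ** M"
    using assms by (auto simp: penrose_inverse_def)
  have MYM: "transpose M = transpose M ** transpose Y ** transpose M"
    by (metis Y(1) matrix_transpose_mul matrix_mul_assoc)
  have MXM: "transpose M = transpose M ** transpose X ** transpose M"
    by (metis X(1) matrix_transpose_mul matrix_mul_assoc)
  have "X = X ** (M ** X)" using X(2) by (simp add: matrix_mul_assoc)
  also have "\<dots> = X ** transpose X ** (transpose M ** transpose Y ** transpose M)"
    by (metis X(3) MYM matrix_transpose_mul matrix_mul_assoc)
  also have "\<dots> = X ** (M ** X) ** (M ** Y)"
    by (metis X(3) Y(3) matrix_transpose_mul matrix_mul_assoc)
  also have "\<dots> = (X ** M ** X) ** M ** Y" by (simp add: matrix_mul_assoc)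
  finally have X_eq: "X = X ** M ** Y" using X(2) by simp
  have "Y = (Y ** M) ** Y" using Y(2) by simp
  also have "\<dots> = (transpose M ** transpose X ** transpose M) ** transpose Y ** Y"
    by (metis Y(4) MXM matrix_transpose_mul)
  also have "\<dots> = (X ** M) ** (Y ** M) ** Y"
    by (metis X(4) Y(4) matrix_transpose_mul matrix_mul_assoc)
  also have "\<dots> = X ** M ** (Y ** M ** Y)" by (simp add: matrix_mul_assoc)
  finally have "Y = X ** M ** Y" using Y(2) by simp
  with X_eq show ?thesis by simp
qed

lemma pinv_eqI: "penrose_inverse M X \<Longrightarrow> pinv M = X"
  unfolding pinv_def penrose_inverse_def[symmetric]
  using penrose_inverse_unique by blast

lemma penrose_inverse_normal_eq:
  assumes "penrose_inverse M X"
  shows "transpose M ** M ** X = transpose M"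
proof -
  have "transpose M ** M ** X = transpose M ** transpose (M ** X)"
    using assms by (simp add: penrose_inverse_def matrix_mul_assoc)
  also have "\<dots> = transpose (M ** X ** M)" by (simp add: matrix_transpose_mul matrix_mul_assoc)
  finally show ?thesis using assms by (simp add: penrose_inverse_def)
qed

lemma penrose_inverse_factor_transpose:
  assumes "penrose_inverse M X"
  shows "X = transpose M ** (transpose X ** X)"
proof -
  have "X = transpose (X ** M) ** X" using assms by (simp add: penrose_inverse_def)
  then show ?thesis by (simp add: matrix_transpose_mul matrix_mul_assoc)
qed

lemma symmetric_inverse_exists:
  fixes G :: "real^'n^'n"
  assumes "transpose G = G" and "\<And>v. G *v v = 0 \<Longrightarrow> v = 0"
  obtains B where "B ** G = mat 1" "G ** B = mat 1" "transpose B = B"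
proof -
  obtain B where BG: "B ** G = mat 1"
    using assms(2) matrix_left_invertible_ker[of G] by blast
  then have GB: "G ** B = mat 1" using matrix_left_right_inverse by blast
  have "transpose B ** G = mat 1"
    by (metis GB assms(1) matrix_transpose_mul transpose_mat)
  then have "transpose B = B"
    by (metis GB matrix_mul_assoc matrix_mul_lid matrix_mul_rid)
  with BG GB that show ?thesis by blast
qed

text \<open>Adding the identity on the complement of S makes the Gram matrix of the restricted columns
  invertible; its inverse times the transposed restriction is the pseudoinverse.\<close>

definition regularized_gram :: "real^'n^'m \<Rightarrow> 'n set \<Rightarrow> real^'n^'n" where
  "regularized_gram A S = transpose (restr_cols A S) ** restr_cols A S + coord_proj (- S)"

lemma regularized_gram_mult_vec:
  "regularized_gram A S *v v =
     vec_restrict S (transpose A *v (A *v vec_restrict S v)) + vec_restrict (- S) v"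
  by (simp add: regularized_gram_def matrix_vector_mult_add_rdistrib coord_proj_mult_vec
      restr_cols_mult_vec transpose_restr_cols_mult_vec flip: matrix_vector_mul_assoc)

lemma regularized_gram_nth_outside:
  "j \<notin> S \<Longrightarrow> (regularized_gram A S *v v) $ j = v $ j"
  by (simp add: regularized_gram_mult_vec)

lemma transpose_regularized_gram: "transpose (regularized_gram A S) = regularized_gram A S"
  by (simp add: regularized_gram_def transpose_add transpose_coord_proj matrix_transpose_mul)

lemma regularized_gram_mult_supported:
  assumes "supp v \<subseteq> S"
  shows "regularized_gram A S *v v = transpose (restr_cols A S) *v (restr_cols A S *v v)"
  using assms unfolding regularized_gram_def
  by (auto simp: matrix_vector_mult_add_rdistrib coord_proj_mult_vec vec_eq_iff supp_def
      simp flip: matrix_vector_mul_assoc)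

lemma regularized_gram_kernel:
  fixes A :: "real^'n^'m"
  assumes inj: "\<And>v. supp v \<subseteq> S \<Longrightarrow> A *v v = 0 \<Longrightarrow> v = 0"
    and G0: "regularized_gram A S *v v = 0"
  shows "v = 0"
proof -
  have "supp v \<subseteq> S"
    using G0 regularized_gram_nth_outside[of _ S A v] by (auto simp: supp_def)
  then have "(restr_cols A S *v v) \<bullet> (restr_cols A S *v v) = 0"
    using G0 by (simp add: inner_mult_vec_transpose regularized_gram_mult_supported)
  then have "A *v v = 0"
    using \<open>supp v \<subseteq> S\<close> by (simp add: restr_cols_mult_vec vec_restrict_eq_self)
  with \<open>supp v \<subseteq> S\<close> show ?thesis by (rule inj)
qed

lemma penrose_inverse_restr_cols_exists:
  fixes A :: "real^'n^'m"
  assumes inj: "\<And>v. supp v \<subseteq> S \<Longrightarrow> A *v v = 0 \<Longrightarrow> v = 0"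
  shows "\<exists>X. penrose_inverse (restr_cols A S) X"
proof -
  define M where "M = restr_cols A S"
  define G where "G = regularized_gram A S"
  obtain B where BG: "B ** G = mat 1" and GB: "G ** B = mat 1" and B_sym: "transpose B = B"
    unfolding G_def
    by (rule symmetric_inverse_exists[OF transpose_regularized_gram regularized_gram_kernel[OF inj]])
  define X where "X = B ** transpose M"
  have M_restrict: "M *v vec_restrict S v = M *v v" for v
    by (simp add: M_def restr_cols_mult_vec)
  have XM: "X *v (M *v v) = vec_restrict S v" for v
  proof -
    have "X *v (M *v v) = B *v (transpose M *v (M *v vec_restrict S v))"
      by (simp add: X_def M_restrict matrix_vector_mul_assoc matrix_mul_assoc)
    also have "\<dots> = B *v (G *v vec_restrict S v)"
      by (simp add: G_def M_def regularized_gram_mult_supported supp_vec_restrict)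
    also have "\<dots> = vec_restrict S v"
      by (simp add: matrix_vector_mul_assoc BG)
    finally show ?thesis .
  qed
  have X_supp: "vec_restrict S (X *v w) = X *v w" for w
  proof -
    have "G ** X = transpose M" by (simp add: X_def matrix_mul_assoc GB)
    then have "G *v (X *v w) = transpose M *v w" by (simp add: matrix_vector_mul_assoc)
    then have "(X *v w) $ j = 0" if "j \<notin> S" for j
      using regularized_gram_nth_outside[OF that, of A "X *v w"] that
      by (simp add: G_def M_def transpose_restr_cols_mult_vec)
    then show ?thesis by (auto simp: vec_eq_iff)
  qed
  have "M ** X ** M = M"
    by (simp add: matrix_eq XM M_restrict flip: matrix_vector_mul_assoc)
  moreover have "X ** M ** X = X"
    by (simp add: matrix_eq XM X_supp flip: matrix_vector_mul_assoc)
  moreover have "X ** M = coord_proj S"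
    by (simp add: matrix_eq XM coord_proj_mult_vec flip: matrix_vector_mul_assoc)
  moreover have "transpose (M ** X) = M ** X"
    by (simp add: X_def matrix_transpose_mul B_sym matrix_mul_assoc)
  ultimately have "penrose_inverse M X"
    by (simp add: penrose_inverse_def transpose_coord_proj)
  then show ?thesis unfolding M_def by blast
qed

lemma penrose_inverse_pinv_restr_cols:
  fixes A :: "real^'n^'m"
  assumes "\<And>v. supp v \<subseteq> S \<Longrightarrow> A *v v = 0 \<Longrightarrow> v = 0"
  shows "penrose_inverse (restr_cols A S) (pinv (restr_cols A S))"
  using penrose_inverse_restr_cols_exists[OF assms] pinv_eqI by metis

lemma supp_pinv_restr_cols:
  fixes A :: "real^'n^'m"
  assumes "\<And>v. supp v \<subseteq> S \<Longrightarrow> A *v v = 0 \<Longrightarrow> v = 0"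
  shows "supp (pinv (restr_cols A S) *v y) \<subseteq> S"
proof -
  let ?M = "restr_cols A S" and ?X = "pinv (restr_cols A S)"
  have "?X *v y = transpose ?M *v (transpose ?X ** ?X *v y)"
    using penrose_inverse_factor_transpose[OF penrose_inverse_pinv_restr_cols[OF assms]]
    by (metis matrix_vector_mul_assoc)
  then show ?thesis
    by (metis transpose_restr_cols_mult_vec supp_vec_restrict)
qed

lemma pinv_restr_cols_normal_eq:
  fixes A :: "real^'n^'m"
  assumes inj: "\<And>v. supp v \<subseteq> S \<Longrightarrow> A *v v = 0 \<Longrightarrow> v = 0" and "j \<in> S"
  shows "(transpose A *v (A *v (pinv (restr_cols A S) *v y) - y)) $ j = 0"
proof -
  let ?M = "restr_cols A S" and ?x = "pinv (restr_cols A S) *v y"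
  have "supp ?x \<subseteq> S" by (rule supp_pinv_restr_cols) (rule inj)
  then have "?M *v ?x = A *v ?x" by (simp add: restr_cols_mult_vec vec_restrict_eq_self)
  moreover have "transpose ?M *v (?M *v ?x) = transpose ?M *v y"
    using penrose_inverse_normal_eq[OF penrose_inverse_pinv_restr_cols[OF inj]]
    by (metis matrix_vector_mul_assoc)
  ultimately have "transpose ?M *v (A *v ?x - y) = 0"
    by (simp add: matrix_vector_mult_diff_distrib)
  then have "vec_restrict S (transpose A *v (A *v ?x - y)) $ j = 0"
    by (simp only: transpose_restr_cols_mult_vec zero_index)
  then show ?thesis using \<open>j \<in> S\<close> by simp
qed

lemma normal_eq_unique_on_support:
  fixes A :: "real^'n^'m"
  assumes inj: "\<And>v. supp v \<subseteq> S \<Longrightarrow> A *v v = 0 \<Longrightarrow> v = 0"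
    and "supp x \<subseteq> S" "supp x' \<subseteq> S"
    and normal_eq: "\<And>j. j \<in> S \<Longrightarrow> (transpose A *v (A *v x - A *v x')) $ j = 0"
  shows "x = x'"
proof -
  have supp: "supp (x - x') \<subseteq> S" using supp_diff assms(2,3) by blast
  have "(A *v (x - x')) \<bullet> (A *v (x - x')) = (x - x') \<bullet> (transpose A *v (A *v (x - x')))"
    by (rule inner_mult_vec_transpose)
  also have "\<dots> = 0"
    using supp normal_eq by (simp add: inner_eq_0_if_supp_subset matrix_vector_mult_diff_distrib)
  finally have "x - x' = 0" using inj[OF supp] by simp
  then show ?thesis by simp
qed

section \<open>Restricted isometry constants\<close>

definition rip_admissible :: "real^'n^'m \<Rightarrow> nat \<Rightarrow> real set" where
  "rip_admissible A l = {\<delta>. \<delta> \<ge> 0 \<and> (\<forall>x::real^'n. card (supp x) \<le> l \<longrightarrow>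
       (1 - \<delta>) * (norm x)^2 \<le> (norm (A *v x))^2 \<and>
       (norm (A *v x))^2 \<le> (1 + \<delta>) * (norm x)^2)}"

lemma ric_eq_Inf: "ric A l = Inf (rip_admissible A l)"
  by (simp add: ric_def rip_admissible_def)

lemma rip_admissible_nonempty:
  fixes A :: "real^'n^'m"
  shows "rip_admissible A l \<noteq> {}"
proof -
  obtain K where K: "\<And>x. norm (A *v x) \<le> norm x * K"
    using bounded_linear.bounded[OF matrix_vector_mul_bounded_linear[of A]] by blast
  have "(norm (A *v x))^2 \<le> (1 + (1 + K^2)) * (norm x)^2" for x
  proof -
    have "(norm (A *v x))^2 \<le> (norm x * K)^2"
      using K[of x] by (simp add: power_mono)
    also have "\<dots> \<le> (1 + (1 + K^2)) * (norm x)^2"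
      by (simp add: power_mult_distrib algebra_simps)
    finally show ?thesis .
  qed
  moreover have "(1 - (1 + K^2)) * (norm x)^2 \<le> (norm (A *v x))^2" for x :: "real^'n"
    by (simp add: mult_nonpos_nonneg order_trans[OF _ zero_le_power2])
  ultimately have "1 + K^2 \<in> rip_admissible A l"
    by (simp add: rip_admissible_def)
  then show ?thesis by blast
qed

lemma rip_admissible_bdd_below: "bdd_below (rip_admissible A l)"
  unfolding rip_admissible_def bdd_below_def by auto

lemma ric_nonneg:
  fixes A :: "real^'n^'m"
  shows "0 \<le> ric A l"
  unfolding ric_eq_Inf using rip_admissible_nonempty
  by (rule cInf_greatest) (auto simp: rip_admissible_def)

lemma ric_mono:
  fixes A :: "real^'n^'m"
  assumes "l \<le> l'"
  shows "ric A l \<le> ric A l'"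
  unfolding ric_eq_Inf
  by (rule cInf_superset_mono[OF rip_admissible_nonempty rip_admissible_bdd_below])
    (use assms in \<open>auto simp: rip_admissible_def\<close>)

lemma ric_abs_bound:
  fixes A :: "real^'n^'m"
  assumes "card (supp x) \<le> l"
  shows "\<bar>(norm (A *v x))^2 - (norm x)^2\<bar> \<le> ric A l * (norm x)^2"
proof (cases "x = 0")
  case False
  then have pos: "(norm x)^2 > 0" by simp
  have "\<bar>(norm (A *v x))^2 - (norm x)^2\<bar> / (norm x)^2 \<le> ric A l"
    unfolding ric_eq_Inf using rip_admissible_nonempty
  proof (rule cInf_greatest)
    fix \<delta> assume "\<delta> \<in> rip_admissible A l"
    then have "\<bar>(norm (A *v x))^2 - (norm x)^2\<bar> \<le> \<delta> * (norm x)^2"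
      using assms by (auto simp: rip_admissible_def algebra_simps)
    then show "\<bar>(norm (A *v x))^2 - (norm x)^2\<bar> / (norm x)^2 \<le> \<delta>"
      using pos by (simp add: divide_le_eq)
  qed
  then show ?thesis using pos by (simp add: divide_le_eq)
qed simp

lemma ric_lower_bound:
  fixes A :: "real^'n^'m"
  assumes "card (supp x) \<le> l"
  shows "(1 - ric A l) * (norm x)^2 \<le> (norm (A *v x))^2"
  using ric_abs_bound[OF assms, of A] by (simp add: algebra_simps abs_le_iff)

lemma rip_sparse_kernel:
  fixes A :: "real^'n^'m"
  assumes "ric A l < 1" "card (supp v) \<le> l" "A *v v = 0"
  shows "v = 0"
  using ric_lower_bound[OF assms(2), of A] assms(1,3)
  by (simp add: mult_le_0_iff)

lemma rip_kernel_on_support: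
  fixes A :: "real^'n^'m"
  assumes "ric A l < 1" "card S \<le> l" "supp v \<subseteq> S" "A *v v = 0"
  shows "v = 0"
  using rip_sparse_kernel[OF assms(1) card_supp_le[OF assms(3,2)] assms(4)] .

lemma rip_inner_disjoint_unit:
  fixes A :: "real^'n^'m"
  assumes "norm u = 1" "norm v = 1" "supp u \<inter> supp v = {}" "card (supp u \<union> supp v) \<le> l"
  shows "\<bar>(A *v u) \<bullet> (A *v v)\<bar> \<le> ric A l"
proof -
  have "u \<bullet> v = 0"
    using assms(3) by (intro inner_eq_0_if_supp_subset[of u "supp u"]) (auto simp: supp_def)
  moreover have "u \<bullet> u = 1" "v \<bullet> v = 1"
    using assms(1,2) by (simp_all add: dot_square_norm)
  ultimately have norms: "(norm (u + v))^2 = 2" "(norm (u - v))^2 = 2"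
    by (simp_all add: power2_norm_eq_inner inner_add inner_diff inner_commute)
  have "card (supp (u + v)) \<le> l" "card (supp (u - v)) \<le> l"
    using card_supp_le[OF supp_add assms(4)] card_supp_le[OF supp_diff assms(4)] .
  from this[THEN ric_abs_bound[of _ _ A]]
  have "\<bar>(norm (A *v (u + v)))^2 - 2\<bar> \<le> 2 * ric A l" "\<bar>(norm (A *v (u - v)))^2 - 2\<bar> \<le> 2 * ric A l"
    using norms by (simp_all add: mult.commute)
  moreover have "(norm (A *v (u + v)))^2 - (norm (A *v (u - v)))^2 = 4 * ((A *v u) \<bullet> (A *v v))"
    by (simp add: power2_norm_eq_inner matrix_vector_right_distrib
        matrix_vector_mult_diff_distrib inner_add inner_diff inner_commute)
  ultimately show ?thesis by linarith
qed

lemma rip_inner_disjoint: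
  fixes A :: "real^'n^'m"
  assumes "supp u \<inter> supp v = {}" "card (supp u \<union> supp v) \<le> l"
  shows "\<bar>(A *v u) \<bullet> (A *v v)\<bar> \<le> ric A l * norm u * norm v"
proof (cases "u = 0 \<or> v = 0")
  case False
  define u' v' where "u' = (1 / norm u) *\<^sub>R u" and "v' = (1 / norm v) *\<^sub>R v"
  have supp_scale: "supp (c *\<^sub>R w) = supp w" if "c \<noteq> 0" for c and w :: "real^'n"
    using that by (auto simp: supp_def)
  have "\<bar>(A *v u') \<bullet> (A *v v')\<bar> \<le> ric A l"
    using False assms by (intro rip_inner_disjoint_unit) (simp_all add: u'_def v'_def supp_scale)
  moreover have "(A *v u) \<bullet> (A *v v) = norm u * norm v * ((A *v u') \<bullet> (A *v v'))"
    using False by (simp add: u'_def v'_def matrix_vector_mult_scaleR)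
  ultimately show ?thesis
    using mult_left_mono[of "\<bar>(A *v u') \<bullet> (A *v v')\<bar>" "ric A l" "norm u * norm v"]
    by (simp add: abs_mult mult_ac)
qed (auto simp: ric_nonneg)

lemma alpha_RIP_nonneg:
  fixes A :: "real^'n^'m"
  assumes "ric A k < 1"
  shows "0 \<le> alpha_RIP A k"
  unfolding alpha_RIP_def using ric_nonneg[of A] assms
  by (intro mult_nonneg_nonneg add_nonneg_nonneg divide_nonneg_pos) auto

section \<open>Least squares on a small support\<close>

lemma transpose_mult_vec_nth:
  fixes A :: "real^'n^'m"
  shows "(transpose A *v z) $ i = column i A \<bullet> z"
  by (simp add: transpose_def matrix_vector_mult_def column_def inner_vec_def mult.commute)

lemma supp_axis: "supp (axis i (1::real)) = {i}"
  by (auto simp: supp_def axis_def)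

lemma normal_eq_error_on_support:
  fixes A :: "real^'n^'m"
  assumes card_T: "card T \<le> k" and supp_x: "supp x \<subseteq> T"
    and normal_eq: "\<And>j. j \<in> T \<Longrightarrow> (transpose A *v (A *v x - A *v xs)) $ j = 0"
    and card_xs: "card (supp xs) \<le> k" and ric_k: "ric A k < 1"
  shows "norm (vec_restrict T (x - xs)) \<le> ric A (2*k) / (1 - ric A k) * norm xs"
proof -
  define w where "w = x - xs"
  define wT where "wT = vec_restrict T w"
  define wC where "wC = w - wT"
  have wC_nth: "wC $ j = (if j \<in> T then 0 else - xs $ j)" for j
    using supp_x by (auto simp: wC_def wT_def w_def supp_def)
  have supp_wT: "supp wT \<subseteq> T" by (simp add: wT_def supp_vec_restrict)
  have supp_wC: "supp wC \<subseteq> supp xs - T" by (auto simp: supp_def wC_nth split: if_splits)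
  have Aw: "A *v w = A *v x - A *v xs" by (simp add: w_def matrix_vector_mult_diff_distrib)
  \<comment> \<open>by the normal equations A wT is orthogonal to A w = A wT + A wC\<close>
  have "(A *v wT) \<bullet> (A *v w) = 0"
    unfolding inner_mult_vec_transpose Aw by (rule inner_eq_0_if_supp_subset[OF supp_wT normal_eq])
  then have "(norm (A *v wT))^2 = - ((A *v wT) \<bullet> (A *v wC))"
    by (simp add: power2_norm_eq_inner wC_def matrix_vector_mult_diff_distrib inner_diff_right)
  also have "\<dots> \<le> ric A (2*k) * norm wT * norm wC"
  proof -
    have "card (supp wT \<union> supp wC) \<le> card (T \<union> supp xs)"
      using supp_wT supp_wC by (intro card_mono) auto
    also have "\<dots> \<le> 2 * k" using card_Un_le[of T "supp xs"] card_T card_xs by linarith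
    finally show ?thesis
      using rip_inner_disjoint[of wT wC "2*k" A] supp_wT supp_wC by fastforce
  qed
  also have "\<dots> \<le> ric A (2*k) * norm wT * norm xs"
  proof -
    have "norm wC \<le> norm xs"
      by (rule norm_le_componentwise_cart) (simp add: wC_nth)
    then show ?thesis using ric_nonneg[of A "2*k"] by (simp add: mult_left_mono)
  qed
  finally have upper: "(norm (A *v wT))^2 \<le> ric A (2*k) * norm wT * norm xs" .
  have lower: "(1 - ric A k) * (norm wT)^2 \<le> (norm (A *v wT))^2"
    by (rule ric_lower_bound) (rule card_supp_le[OF supp_wT card_T])
  have "norm wT \<le> ric A (2*k) / (1 - ric A k) * norm xs"
  proof (cases "wT = 0")
    case False
    have "(1 - ric A k) * norm wT * norm wT \<le> ric A (2*k) * norm xs * norm wT"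
      using lower upper by (simp add: power2_eq_square mult_ac)
    then have "(1 - ric A k) * norm wT \<le> ric A (2*k) * norm xs"
      using False by simp
    then show ?thesis using ric_k by (simp add: field_simps)
  qed (use ric_k ric_nonneg[of A "2*k"] in simp)
  then show ?thesis by (simp add: wT_def w_def)
qed

lemma normal_eq_error_bound:
  fixes A :: "real^'n^'m"
  assumes "card T \<le> k" and supp_x: "supp x \<subseteq> T"
    and "\<And>j. j \<in> T \<Longrightarrow> (transpose A *v (A *v x - A *v xs)) $ j = 0"
    and "card (supp xs) \<le> k" and "ric A k < 1"
  shows "norm (x - xs) \<le> (1 + ric A (2*k) / (1 - ric A k)) * norm xs"
proof -
  let ?wT = "vec_restrict T (x - xs)"
  have "x $ j = 0" if "j \<notin> T" for j
    using supp_x that by (auto simp: supp_def)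
  then have "norm (x - xs - ?wT) \<le> norm xs"
    by (intro norm_le_componentwise_cart) simp
  moreover have "norm (x - xs) \<le> norm ?wT + norm (x - xs - ?wT)"
    by (metis add.commute diff_add_cancel norm_triangle_ineq)
  ultimately show ?thesis
    using normal_eq_error_on_support[OF assms] by (simp add: algebra_simps)
qed

lemma normal_eq_gradient_bound:
  fixes A :: "real^'n^'m"
  assumes card_T: "card T \<le> k" and supp_x: "supp x \<subseteq> T"
    and normal_eq: "\<And>j. j \<in> T \<Longrightarrow> (transpose A *v (A *v x - A *v xs)) $ j = 0"
    and card_xs: "card (supp xs) \<le> k" and ric_k: "ric A k < 1"
    and unit_col: "norm (column i A) = 1" and "i \<notin> T"
  shows "\<bar>(transpose A *v (A *v x - A *v xs)) $ i + xs $ i\<bar> \<le> alpha_RIP A k * norm xs"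
proof -
  define w where "w = x - xs"
  define w' where "w' = w - (w $ i) *\<^sub>R axis i 1"
  have w_i: "w $ i = - xs $ i"
    using supp_x \<open>i \<notin> T\<close> by (auto simp: w_def supp_def)
  have supp_w': "supp w' \<subseteq> (T \<union> supp xs) - {i}"
    using supp_x by (auto simp: w'_def w_def supp_def axis_def)
  have "A *v w = A *v w' + (w $ i) *\<^sub>R column i A"
    by (simp add: w'_def matrix_vector_mult_diff_distrib matrix_vector_mult_scaleR
        matrix_vector_mult_basis)
  moreover have "column i A \<bullet> column i A = 1"
    using unit_col by (simp add: dot_square_norm)
  \<comment> \<open>the unit column cancels the i-th coordinate, since w i = - xs i\<close>
  ultimately have "(transpose A *v (A *v x - A *v xs)) $ i + xs $ i = (A *v axis i 1) \<bullet> (A *v w')"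
    by (simp add: transpose_mult_vec_nth w_i matrix_vector_mult_basis inner_add_right inner_diff_right
        flip: matrix_vector_mult_diff_distrib w_def)
  also have "\<bar>\<dots>\<bar> \<le> ric A (2*k+1) * norm (axis i (1::real)) * norm w'"
  proof (rule rip_inner_disjoint)
    show "supp (axis i 1) \<inter> supp w' = {}" using supp_w' by (auto simp: supp_axis)
    have "card (insert i (T \<union> supp xs)) \<le> Suc (card (T \<union> supp xs))"
      by (simp add: card_insert_if)
    then have "card (insert i (T \<union> supp xs)) \<le> 2*k+1"
      using card_Un_le[of T "supp xs"] card_T card_xs by linarith
    moreover have "supp (axis i 1) \<union> supp w' \<subseteq> insert i (T \<union> supp xs)"
      using supp_w' by (auto simp: supp_axis)
    ultimately show "card (supp (axis i 1) \<union> supp w') \<le> 2*k+1"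
      using card_mono[OF finite] by (meson le_trans)
  qed
  also have "\<dots> \<le> ric A (2*k+1) * norm w"
  proof -
    have "norm w' \<le> norm w"
      by (rule norm_le_componentwise_cart) (simp add: w'_def axis_def)
    then show ?thesis using ric_nonneg[of A "2*k+1"] by (simp add: mult_left_mono)
  qed
  also have "\<dots> \<le> ric A (2*k+1) * ((1 + ric A (2*k) / (1 - ric A k)) * norm xs)"
    unfolding w_def using normal_eq_error_bound[OF assms(1-5)] ric_nonneg[of A "2*k+1"]
    by (rule mult_left_mono)
  finally show ?thesis by (simp add: alpha_RIP_def mult.assoc)
qed

section \<open>Support exploration\<close>

lemma card_largest_le: "card (largest k (v::real^('n::{finite,linorder}))) \<le> k"
proof -
  define beats where "beats i = {j. \<bar>v$j\<bar> > \<bar>v$i\<bar> \<or> (\<bar>v$j\<bar> = \<bar>v$i\<bar> \<and> j > i)}" for i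
  have less: "card (beats j) < card (beats i)" if "j \<in> beats i" for i j
  proof (rule psubset_card_mono)
    show "beats j \<subset> beats i"
    proof
      show "beats j \<subseteq> beats i" using that by (auto simp: beats_def)
      show "beats j \<noteq> beats i" using that by (auto simp: beats_def)
    qed
  qed simp
  have "inj (\<lambda>i. card (beats i))"
  proof (rule injI)
    fix i j assume "card (beats i) = card (beats j)"
    moreover have "i \<noteq> j \<Longrightarrow> j \<in> beats i \<or> i \<in> beats j" by (auto simp: beats_def)
    ultimately show "i = j" using less by fastforce
  qed
  moreover have "largest k v = {i. card (beats i) < k}"
    by (simp add: largest_def beats_def)
  ultimately have "card (largest k v) \<le> card {..<k}"
    by (intro card_inj_on_le[where f = "\<lambda>i. card (beats i)"]) (auto simp: inj_on_def)
  then show ?thesis by simp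
qed

lemma not_in_largest_dominated:
  fixes v :: "real^('n::{finite,linorder})"
  assumes "i \<notin> largest k v" "i \<in> P" "card P \<le> k"
  shows "\<exists>j. j \<notin> P \<and> \<bar>v$i\<bar> \<le> \<bar>v$j\<bar>"
proof (rule ccontr)
  assume none: "\<not> ?thesis"
  define beats where "beats = {j. \<bar>v$j\<bar> > \<bar>v$i\<bar> \<or> (\<bar>v$j\<bar> = \<bar>v$i\<bar> \<and> j > i)}"
  have "k \<le> card beats" using assms(1) by (simp add: largest_def beats_def)
  also have "\<dots> \<le> card (P - {i})"
    using none by (intro card_mono) (auto simp: beats_def)
  also have "\<dots> < card P" using card_Diff1_less[OF finite assms(2)] .
  finally show False using assms(3) by simp
qed

definition misses :: "(nat \<Rightarrow> 'a set) \<Rightarrow> 'a \<Rightarrow> nat \<Rightarrow> real" where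
  "misses S i t = (\<Sum>s<t. of_bool (i \<notin> S s))"

lemma misses_0 [simp]: "misses S i 0 = 0"
  by (simp add: misses_def)

lemma misses_Suc [simp]: "misses S i (Suc t) = misses S i t + of_bool (i \<notin> S t)"
  by (simp add: misses_def)

text \<open>The iteration of SEA, abstracted: g t is the gradient A^T (A x^t - y) and a the bound
  alpha_k ||x*|| that the least-squares step and the RIP provide.\<close>

locale sea_dynamics =
  fixes X g :: "nat \<Rightarrow> real^('n::{finite,linorder})" and xs :: "real^('n::{finite,linorder})"
    and k :: nat and \<eta> a \<mu> :: real
  assumes X_0: "X 0 = 0"
    and X_Suc: "X (Suc t) = X t - \<eta> *\<^sub>R g t"
    and eta_pos: "0 < \<eta>"
    and a_nonneg: "0 \<le> a"
    and grad_selected: "j \<in> largest k (X t) \<Longrightarrow> g t $ j = 0"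
    and grad_unselected: "i \<notin> largest k (X t) \<Longrightarrow> \<bar>g t $ i + xs $ i\<bar> \<le> a"
    and card_supp: "card (supp xs) \<le> k"
    and min_supp: "i \<in> supp xs \<Longrightarrow> \<mu> \<le> \<bar>xs $ i\<bar>"
begin

abbreviation selected :: "nat \<Rightarrow> 'n set" where
  "selected t \<equiv> largest k (X t)"

lemma supp_coord_growth:
  assumes "i \<in> supp xs"
  shows "\<eta> * (\<mu> - a) * misses selected i t \<le> sgn (xs $ i) * X t $ i"
proof (induction t)
  case (Suc t)
  have "(\<mu> - a) * of_bool (i \<notin> selected t) \<le> sgn (xs $ i) * - g t $ i"
  proof (cases "i \<in> selected t")
    case False
    then have "\<bar>g t $ i + xs $ i\<bar> \<le> a" by (rule grad_unselected)
    moreover have "\<mu> \<le> \<bar>xs $ i\<bar>" using assms by (rule min_supp)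
    moreover have "xs $ i \<noteq> 0" using assms by (simp add: supp_def)
    ultimately show ?thesis
      using False by (cases "xs $ i > 0") (auto simp: sgn_if abs_if split: if_splits)
  qed (simp add: grad_selected)
  then have "\<eta> * ((\<mu> - a) * of_bool (i \<notin> selected t)) \<le> \<eta> * (sgn (xs $ i) * - g t $ i)"
    using eta_pos by (intro mult_left_mono) simp_all
  then show ?case using Suc.IH by (simp add: X_Suc algebra_simps)
qed (simp add: X_0)

lemma off_supp_coord_bound:
  assumes "i \<notin> supp xs"
  shows "\<bar>X t $ i\<bar> \<le> \<eta> * a * t"
proof (induction t)
  case (Suc t)
  have "xs $ i = 0" using assms by (simp add: supp_def)
  then have "\<bar>g t $ i\<bar> \<le> a"
    using grad_selected[of i t] grad_unselected[of i t] a_nonneg by (cases "i \<in> selected t") auto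
  then have "\<bar>\<eta> * g t $ i\<bar> \<le> \<eta> * a" using eta_pos by (simp add: abs_mult)
  then show ?case using Suc.IH by (simp add: X_Suc algebra_simps)
qed (simp add: X_0)

lemma misses_bound_unselected:
  assumes "i \<in> supp xs" "i \<notin> selected t"
  shows "(\<mu> - a) * misses selected i t \<le> a * t"
proof -
  obtain j where "j \<notin> supp xs" "\<bar>X t $ i\<bar> \<le> \<bar>X t $ j\<bar>"
    using not_in_largest_dominated[OF assms(2,1) card_supp] by blast
  have "sgn (xs $ i) * X t $ i \<le> \<bar>X t $ i\<bar>" by (simp add: sgn_if abs_ge_self abs_ge_minus_self)
  also have "\<dots> \<le> \<bar>X t $ j\<bar>" by fact
  also have "\<dots> \<le> \<eta> * a * t" by (rule off_supp_coord_bound) fact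
  finally have "sgn (xs $ i) * X t $ i \<le> \<eta> * a * t" .
  then have "\<eta> * ((\<mu> - a) * misses selected i t) \<le> \<eta> * (a * t)"
    using supp_coord_growth[OF assms(1), of t] by (simp add: mult_ac)
  then show ?thesis using eta_pos by simp
qed

lemma misses_bound:
  assumes "i \<in> supp xs" "a \<le> \<mu>"
  shows "(\<mu> - a) * misses selected i t \<le> a * t + (\<mu> - a)"
proof (induction t)
  case (Suc t)
  show ?case
  proof (cases "i \<in> selected t")
    case True
    then show ?thesis using Suc.IH a_nonneg by (simp add: distrib_left)
  next
    case False
    then show ?thesis
      using misses_bound_unselected[OF assms(1) False] a_nonneg by (simp add: algebra_simps)
  qed
qed (use assms in simp)

lemma support_selected:
  assumes budget: "(real k + 1) * a \<le> \<beta> * \<mu>" and "0 < \<mu>" "\<beta> < 1"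
    and N: "real k < real N * (1 - \<beta>)"
  shows "\<exists>t<N. supp xs \<subseteq> selected t"
proof (rule ccontr)
  assume never: "\<not> ?thesis"
  have "a \<le> (real k + 1) * a" using a_nonneg by (simp add: distrib_right)
  also have "\<dots> \<le> \<beta> * \<mu>" by (rule budget)
  also have "\<dots> \<le> \<mu>" using \<open>0 < \<mu>\<close> \<open>\<beta> < 1\<close> by simp
  finally have "a \<le> \<mu>" .
  have one_le: "1 \<le> (\<Sum>i\<in>supp xs. of_bool (i \<notin> selected s) :: real)" if "s < N" for s
  proof -
    obtain i where "i \<in> supp xs" "i \<notin> selected s" using never \<open>s < N\<close> by blast
    then show ?thesis
      using member_le_sum[of i "supp xs" "\<lambda>i. of_bool (i \<notin> selected s) :: real"] by simp
  qed
  have "real N = (\<Sum>s<N. 1 :: real)" by simp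
  also have "\<dots> \<le> (\<Sum>s<N. \<Sum>i\<in>supp xs. of_bool (i \<notin> selected s))"
    by (rule sum_mono) (rule one_le, simp)
  also have "\<dots> = (\<Sum>i\<in>supp xs. misses selected i N)"
    unfolding misses_def by (rule sum.swap)
  finally have "(\<mu> - a) * N \<le> (\<Sum>i\<in>supp xs. (\<mu> - a) * misses selected i N)"
    using \<open>a \<le> \<mu>\<close> by (simp add: mult_left_mono flip: sum_distrib_left)
  also have "\<dots> \<le> card (supp xs) * (a * N + (\<mu> - a))"
    using misses_bound[OF _ \<open>a \<le> \<mu>\<close>] by (intro sum_bounded_above) auto
  also have "\<dots> \<le> k * (a * N + (\<mu> - a))"
    using card_supp a_nonneg \<open>a \<le> \<mu>\<close> by (intro mult_right_mono) auto
  finally have "\<mu> * N \<le> (real k + 1) * a * N + k * \<mu> - k * a"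
    by (simp add: algebra_simps)
  also have "\<dots> \<le> \<beta> * \<mu> * N + k * \<mu>"
    using mult_right_mono[OF budget, of "real N"] mult_nonneg_nonneg[OF of_nat_0_le_iff a_nonneg, of k]
    by linarith
  finally have "\<mu> * (N * (1 - \<beta>)) \<le> \<mu> * k"
    by (simp add: algebra_simps)
  with \<open>0 < \<mu>\<close> N show False by simp
qed

end

lemma supp_sea_x:
  fixes A :: "real^('n::{finite,linorder})^'m"
  assumes "ric A k < 1"
  shows "supp (sea_x A y k \<eta> X0 t) \<subseteq> sea_S A y k \<eta> X0 t"
  unfolding sea_x_def sea_xt_def sea_S_def
  by (rule supp_pinv_restr_cols) (rule rip_kernel_on_support[OF assms card_largest_le])

lemma sea_x_normal_eq:
  fixes A :: "real^('n::{finite,linorder})^'m"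
  assumes "ric A k < 1" "j \<in> sea_S A y k \<eta> X0 t"
  shows "(transpose A *v (A *v sea_x A y k \<eta> X0 t - y)) $ j = 0"
  using assms(2) unfolding sea_x_def sea_xt_def sea_S_def
  by (intro pinv_restr_cols_normal_eq) (rule rip_kernel_on_support[OF assms(1) card_largest_le])

lemma sea_dynamics_of_SEA:
  fixes A :: "real^('n::{finite,linorder})^'m"
  assumes ric: "ric A (2*k+1) < 1" and unit_col: "\<And>i. norm (column i A) = 1"
    and card_xs: "card (supp xs) \<le> k" and y: "y = A *v xs" and "0 < \<eta>"
    and "\<And>i. i \<in> supp xs \<Longrightarrow> \<mu> \<le> \<bar>xs $ i\<bar>"
  shows "sea_dynamics (sea_X A y k \<eta> 0) (\<lambda>t. transpose A *v (A *v sea_x A y k \<eta> 0 t - y))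
           xs k \<eta> (alpha_RIP A k * norm xs) \<mu>"
proof
  have ric_k: "ric A k < 1" using ric ric_mono[of k "2*k+1" A] by simp
  fix t i j
  show "sea_X A y k \<eta> 0 (Suc t) =
      sea_X A y k \<eta> 0 t - \<eta> *\<^sub>R (transpose A *v (A *v sea_x A y k \<eta> 0 t - y))"
    by (simp add: sea_x_def)
  show "0 \<le> alpha_RIP A k * norm xs"
    using alpha_RIP_nonneg[OF ric_k] by simp
  show "(transpose A *v (A *v sea_x A y k \<eta> 0 t - y)) $ j = 0" if "j \<in> largest k (sea_X A y k \<eta> 0 t)"
    using sea_x_normal_eq[OF ric_k] that by (simp add: sea_S_def)
  show "\<bar>(transpose A *v (A *v sea_x A y k \<eta> 0 t - y)) $ i + xs $ i\<bar> \<le> alpha_RIP A k * norm xs"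
    if "i \<notin> largest k (sea_X A y k \<eta> 0 t)"
    unfolding y
    by (rule normal_eq_gradient_bound[OF card_largest_le _ _ card_xs ric_k unit_col that])
      (use supp_sea_x[OF ric_k] sea_x_normal_eq[OF ric_k] in \<open>simp_all add: sea_S_def y\<close>)
qed (use assms in auto)

lemma sea_x_eq_if_supp_selected:
  fixes A :: "real^('n::{finite,linorder})^'m"
  assumes ric_k: "ric A k < 1" and "y = A *v xs" "supp xs \<subseteq> sea_S A y k \<eta> X0 t"
  shows "sea_x A y k \<eta> X0 t = xs"
proof (rule normal_eq_unique_on_support)
  show "\<And>v. supp v \<subseteq> sea_S A y k \<eta> X0 t \<Longrightarrow> A *v v = 0 \<Longrightarrow> v = 0"
    unfolding sea_S_def by (rule rip_kernel_on_support[OF ric_k card_largest_le])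
qed (use assms supp_sea_x[OF ric_k] sea_x_normal_eq[OF ric_k] in auto)

lemma sea_x_eq_if_exact_fit:
  fixes A :: "real^('n::{finite,linorder})^'m"
  assumes ric_2k: "ric A (2*k) < 1" and card_xs: "card (supp xs) \<le> k"
    and fit: "A *v sea_x A y k \<eta> X0 t = A *v xs"
  shows "sea_x A y k \<eta> X0 t = xs"
proof -
  have ric_k: "ric A k < 1" using ric_2k ric_mono[of k "2*k" A] by simp
  have "card (supp (sea_x A y k \<eta> X0 t)) \<le> k"
    by (rule card_supp_le[OF supp_sea_x[OF ric_k]]) (simp add: sea_S_def card_largest_le)
  then have "card (supp (sea_x A y k \<eta> X0 t - xs)) \<le> 2*k"
    using card_supp_le[OF supp_diff] card_Un_le[of "supp (sea_x A y k \<eta> X0 t)" "supp xs"] card_xs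
    by fastforce
  moreover have "A *v (sea_x A y k \<eta> X0 t - xs) = 0"
    using fit by (simp add: matrix_vector_mult_diff_distrib)
  ultimately have "sea_x A y k \<eta> X0 t - xs = 0"
    by (rule rip_sparse_kernel[OF ric_2k])
  then show ?thesis by simp
qed

lemma sea_best_iterate_recovers:
  fixes A :: "real^('n::{finite,linorder})^'m"
  assumes ric: "ric A (2*k+1) < 1" and unit_col: "\<And>i. norm (column i A) = 1"
    and card_xs: "card (supp xs) \<le> k" and y: "y = A *v xs" and "0 < \<eta>"
    and min_supp: "\<And>i. i \<in> supp xs \<Longrightarrow> \<mu> \<le> \<bar>xs $ i\<bar>" and "0 < \<mu>"
    and budget: "(real k + 1) * (alpha_RIP A k * norm xs) \<le> \<beta> * \<mu>" and "\<beta> < 1"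
    and N: "real k < real N * (1 - \<beta>)"
    and best: "\<forall>t<N. norm (A *v sea_x A y k \<eta> 0 tb - y) \<le> norm (A *v sea_x A y k \<eta> 0 t - y)"
  shows "supp xs \<subseteq> sea_S A y k \<eta> 0 tb \<and> sea_x A y k \<eta> 0 tb = xs"
proof -
  have ric_k: "ric A k < 1" and ric_2k: "ric A (2*k) < 1"
    using ric ric_mono[of k "2*k+1" A] ric_mono[of "2*k" "2*k+1" A] by simp_all
  interpret sea_dynamics "sea_X A y k \<eta> 0" "\<lambda>t. transpose A *v (A *v sea_x A y k \<eta> 0 t - y)"
    xs k \<eta> "alpha_RIP A k * norm xs" \<mu>
    using sea_dynamics_of_SEA ric unit_col card_xs y \<open>0 < \<eta>\<close> min_supp .
  obtain t0 where "t0 < N" "supp xs \<subseteq> sea_S A y k \<eta> 0 t0"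
    using support_selected[OF budget \<open>0 < \<mu>\<close> \<open>\<beta> < 1\<close> N] unfolding sea_S_def by blast
  then have "sea_x A y k \<eta> 0 t0 = xs"
    using sea_x_eq_if_supp_selected ric_k y by blast
  then have "A *v sea_x A y k \<eta> 0 tb = A *v xs"
    using best \<open>t0 < N\<close> y by force
  then have "sea_x A y k \<eta> 0 tb = xs"
    using sea_x_eq_if_exact_fit ric_2k card_xs by blast
  then show ?thesis
    using supp_sea_x[OF ric_k] by metis
qed

theorem corollary4p2:
  fixes A :: "real^('n::{finite,linorder})^'m" and xs :: "real^('n::{finite,linorder})" and y :: "real^'m"
    and k :: nat and \<beta> :: real
  assumes k_pos: "k > 0"
    and supp_card: "1 \<le> card (supp xs)" "card (supp xs) \<le> k"
    and y_def: "y = A *v xs"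
    and rip: "has_RIP A (2*k+1)"
    and col_norm: "\<And>i. norm (column i A) = 1"
    and beta: "0 < \<beta>" "\<beta> < 1"
    and beta_bound: "2 * real k * alpha_RIP A k * norm xs / Min ((\<lambda>i. \<bar>xs$i\<bar>) ` supp xs) \<le> \<beta>"
  shows "gamma_RIP A k * norm (0::real^'m)
           < Min ((\<lambda>i. \<bar>xs$i\<bar>) ` supp xs) / (2 * real k) - alpha_RIP A k * norm xs
         \<and> (\<forall>\<eta> N tb. \<eta> > 0 \<longrightarrow> real N > (real k + 1) / (1 - \<beta>) \<longrightarrow> tb < N \<longrightarrow>
           (\<forall>t'<N. norm (A *v sea_x A y k \<eta> 0 tb - y) \<le> norm (A *v sea_x A y k \<eta> 0 t' - y)) \<longrightarrow>
           supp xs \<subseteq> sea_S A y k \<eta> 0 tb \<and> sea_x A y k \<eta> 0 tb = xs)"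
proof -
  define \<mu> where "\<mu> = Min ((\<lambda>i. \<bar>xs$i\<bar>) ` supp xs)"
  define a where "a = alpha_RIP A k * norm xs"
  have ric: "ric A (2*k+1) < 1" using rip by (simp add: has_RIP_def)
  then have a_nonneg: "0 \<le> a"
    using alpha_RIP_nonneg[of A k] ric_mono[of k "2*k+1" A] by (simp add: a_def)
  have min_supp: "\<mu> \<le> \<bar>xs$i\<bar>" if "i \<in> supp xs" for i
    unfolding \<mu>_def using that by simp
  have "\<mu> \<in> (\<lambda>i. \<bar>xs$i\<bar>) ` supp xs"
    unfolding \<mu>_def using supp_card(1) by (intro Min_in) auto
  then have \<mu>_pos: "0 < \<mu>" by (auto simp: supp_def)
  have budget: "2 * real k * a \<le> \<beta> * \<mu>"
    using beta_bound \<mu>_pos by (simp add: a_def flip: \<mu>_def) (simp add: pos_divide_le_eq mult.assoc)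
  also have "\<beta> * \<mu> < \<mu>" using beta \<mu>_pos by simp
  finally have "gamma_RIP A k * norm (0::real^'m) < \<mu> / (2 * real k) - a"
    using k_pos by (simp add: field_simps)
  moreover have "(real k + 1) * a \<le> \<beta> * \<mu>"
    using budget k_pos a_nonneg mult_right_mono[of "real k + 1" "2 * real k" a] by linarith
  moreover have "real k < real N * (1 - \<beta>)" if "real N > (real k + 1) / (1 - \<beta>)" for N
    using that beta by (simp add: divide_less_eq)
  ultimately show ?thesis
    using sea_best_iterate_recovers[OF ric col_norm supp_card(2) y_def _ min_supp \<mu>_pos]
      beta(2) unfolding \<mu>_def a_def by blast
qed

end
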